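(* Let $p(z)=a_0z^n+a_1z^{n-1}+\dots+a_n$ with $a_0\in\mathbb{R}$, $a_0>0$, $a_1,\dots,a_n\in\mathbb{C}$, and suppose $p$ has no roots on the imaginary axis. Let $\varphi_p:\mathbb{R}\to\mathbb{R}$ be a continuous branch of $\omega\mapsto\operatorname{Arg}\big(i^{-n}p(i\omega)\big)$ and $\Delta_p=\lim_{\omega\to+\infty}\varphi_p(\omega)-\lim_{\omega\to-\infty}\varphi_p(\omega)$. Let $f_0(\omega)=\operatorname{Re}\big[i^{-n}p(i\omega)\big]$ ($\omega\in\mathbb{R}$), let $\omega_0<\omega_1<\dots<\omega_m$ be the real roots of $f_0$ of odd multiplicity (i.e. the parameter values at which the curve $\omega\mapsto i^{-n}p(i\omega)$ crosses the imaginary axis), and for $k=0,\dots,m$ put $i_k=\lim_{\omega\to\omega_k}\operatorname{sign}\frac{d}{d\omega}\varphi_p(\omega)$. Then $$\Delta_p=\pi\,(i_0+i_1+\dots+i_m),$$ where for $m=-1$ (no such roots) the right-hand side is $0$.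
   Context: $\Delta_p$ does not depend on the choice of continuous branch. *)

theory Defs
  imports "HOL-Analysis.Analysis" "HOL-Computational_Algebra.Polynomial"
begin

definition imag_axis_curve :: "complex poly \<Rightarrow> real \<Rightarrow> complex" where
  "imag_axis_curve p w = inverse (\<i> ^ degree p) * poly p (\<i> * complex_of_real w)"

text \<open>f0 as a real polynomial in w: the real part of the (complex) polynomial
  i^(-n) p(i w); evaluating it at real w gives Re (imag_axis_curve p w).\<close>
definition f0_poly :: "complex poly \<Rightarrow> real poly" where
  "f0_poly p = map_poly Re (smult (inverse (\<i> ^ degree p)) (p \<circ>\<^sub>p [:0, \<i>:]))"

definition odd_crossings :: "complex poly \<Rightarrow> real set" where
  "odd_crossings p = {w. odd (order w (f0_poly p))}"

definition Delta :: "(real \<Rightarrow> real) \<Rightarrow> real" where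
  "Delta \<phi> = Lim at_top \<phi> - Lim at_bot \<phi>"

end

theory Submission
  imports Defs
begin

text \<open>
  Write \<gamma>(w) = i^(-n) p(i w), so that f0 = Re \<gamma> and cos \<phi> = f0 / |\<gamma>|. Where f0 does not
  change sign, neither does cos \<phi>, so by continuity \<phi> stays in one strip |\<phi> - k \<pi>| \<le> \<pi>/2;
  in particular \<phi> tends to multiples of \<pi> at \<plusminus>\<infinity>, where \<gamma>(w) / w^n tends to the real
  number a0. At a root of f0 of odd multiplicity the sign of cos \<phi> flips, so \<phi> passes
  through the common boundary value into a neighbouring strip. Since \<phi>' = Im (\<gamma>'/\<gamma>) is a
  rational function, \<phi> is strictly monotone on both sides of the crossing, so the strip
  index jumps by exactly the sign of \<phi>' there. Summing the jumps gives \<Delta>p.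
\<close>

section \<open>The curve along the imaginary axis as a polynomial\<close>

definition imag_axis_poly :: "complex poly \<Rightarrow> complex poly" where
  "imag_axis_poly p = smult (inverse (\<i> ^ degree p)) (p \<circ>\<^sub>p [:0, \<i>:])"

lemma imag_axis_curve_eq_poly:
  "imag_axis_curve p w = poly (imag_axis_poly p) (complex_of_real w)"
  by (simp add: imag_axis_curve_def imag_axis_poly_def poly_pcompose mult.commute)

lemma poly_map_poly_Re: "poly (map_poly Re q) x = Re (poly q (complex_of_real x))"
  by (induction q) (auto simp: map_poly_pCons)

lemma poly_map_poly_Im: "poly (map_poly Im q) x = Im (poly q (complex_of_real x))"
  by (induction q) (auto simp: map_poly_pCons)

lemma poly_f0_poly: "poly (f0_poly p) w = Re (imag_axis_curve p w)"
  by (simp add: f0_poly_def imag_axis_poly_def[symmetric] poly_map_poly_Re imag_axis_curve_eq_poly)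

lemma degree_imag_axis_poly [simp]: "degree (imag_axis_poly p) = degree p"
  by (simp add: imag_axis_poly_def degree_pcompose)

lemma lead_coeff_imag_axis_poly [simp]: "lead_coeff (imag_axis_poly p) = lead_coeff p"
proof -
  have "lead_coeff (p \<circ>\<^sub>p [:0, \<i>:]) = lead_coeff p * \<i> ^ degree p"
    by (subst lead_coeff_comp) auto
  then show ?thesis
    by (simp add: imag_axis_poly_def degree_pcompose)
qed

lemma f0_poly_nonzero: "Re (lead_coeff p) \<noteq> 0 \<Longrightarrow> f0_poly p \<noteq> 0"
  by (metis coeff_0 coeff_map_poly degree_imag_axis_poly f0_poly_def
      imag_axis_poly_def lead_coeff_imag_axis_poly zero_complex.sel(1))

lemma tendsto_Im_sgn_poly_at_infinity:
  fixes q :: "complex poly"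
  assumes "lead_coeff q \<in> \<real>" "q \<noteq> 0"
  shows "((\<lambda>x::real. Im (sgn (poly q (complex_of_real x)))) \<longlongrightarrow> 0) at_infinity"
proof -
  have "(norm :: real \<Rightarrow> real) = abs"
    by (rule ext) simp
  then have "filterlim (\<lambda>x::real. norm (complex_of_real x)) at_top at_infinity"
    using filterlim_norm_at_top[where 'a = real] by simp
  then have "filterlim complex_of_real at_infinity (at_infinity :: real filter)"
    by (rule filterlim_norm_at_top_imp_at_infinity)
  from filterlim_compose[OF poly_divide_tendsto_aux[of q] this]
  have "((\<lambda>x. poly q (complex_of_real x) / complex_of_real x ^ degree q) \<longlongrightarrow> lead_coeff q) at_infinity" .
  then have "((\<lambda>x. Im (sgn (poly q (complex_of_real x) / complex_of_real x ^ degree q)))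
      \<longlongrightarrow> Im (sgn (lead_coeff q))) at_infinity"
    using assms(2) by (intro tendsto_intros) auto
  moreover have "Im (sgn (lead_coeff q)) = 0"
    using assms(1) by (simp add: complex_is_Real_iff)
  ultimately have "((\<lambda>x. \<bar>Im (sgn (poly q (complex_of_real x) / complex_of_real x ^ degree q))\<bar>)
      \<longlongrightarrow> 0) at_infinity"
    using tendsto_rabs_zero by fastforce
  moreover have "eventually (\<lambda>x::real. x \<noteq> 0) at_infinity"
    using eventually_at_infinity[of "\<lambda>x::real. x \<noteq> 0"] by (metis norm_zero zero_less_one not_less)
  then have "eventually (\<lambda>x. \<bar>Im (sgn (poly q (complex_of_real x) / complex_of_real x ^ degree q))\<bar>
      = \<bar>Im (sgn (poly q (complex_of_real x)))\<bar>) at_infinity"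
  proof eventually_elim
    case (elim x)
    have "sgn (complex_of_real x ^ degree q) = complex_of_real (sgn x ^ degree q)"
      by (metis of_real_power power_sgn sgn_of_real)
    moreover have "\<bar>sgn x ^ degree q\<bar> = 1"
      using elim by (simp add: power_abs)
    ultimately show ?case
      by (simp del: Im_sgn)
  qed
  ultimately show ?thesis
    using Lim_transform_eventually tendsto_rabs_zero_iff by fastforce
qed

section \<open>Signs of functions and polynomials on connected sets\<close>

lemma connected_nonvanishing_sign:
  fixes f :: "'a::topological_space \<Rightarrow> real"
  assumes "connected S" "continuous_on S f" "\<forall>x\<in>S. f x \<noteq> 0"
  shows "\<exists>\<sigma>\<in>{-1,1}. \<forall>x\<in>S. \<sigma> * f x > 0"
proof -
  have "\<not> (f x < 0 \<and> 0 < f y)" if "x \<in> S" "y \<in> S" for x y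
  proof
    assume "f x < 0 \<and> 0 < f y"
    moreover have "connected (f ` S)"
      using assms(1,2) connected_continuous_image by blast
    ultimately have "0 \<in> f ` S"
      using connected_contains_Icc[of "f ` S" "f x" "f y"] that by fastforce
    then show False
      using assms(3) by auto
  qed
  then have "(\<forall>x\<in>S. f x > 0) \<or> (\<forall>x\<in>S. f x < 0)"
    using assms(3) by (meson linorder_neqE_linordered_idom)
  then show ?thesis
    by (metis insertCI mult_1 mult_minus1 neg_0_less_iff_less)
qed

lemma poly_sign_if_even_orders:
  fixes P :: "real poly"
  assumes "connected S" "\<forall>r\<in>S. even (order r P)"
  shows "\<exists>\<sigma>\<in>{-1,1}. \<forall>x\<in>S. \<sigma> * poly P x \<ge> 0"
  using assms(2)
proof (induction "degree P" arbitrary: P rule: less_induct)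
  case less
  consider (zero) "P = 0" | (no_root) "\<forall>x\<in>S. poly P x \<noteq> 0"
    | (root) r where "r \<in> S" "poly P r = 0" "P \<noteq> 0"
    by blast
  then show ?case
  proof cases
    case zero
    then show ?thesis
      by auto
  next
    case no_root
    moreover have "continuous_on S (poly P)"
      by (intro continuous_intros)
    ultimately show ?thesis
      using connected_nonvanishing_sign[OF assms(1)] by (meson less_imp_le)
  next
    case root
    then have "order r P \<noteq> 0"
      using order_root by blast
    with less.prems root(1) have "2 \<le> order r P"
      by (auto elim!: evenE)
    then have "[:-r,1:]^2 dvd P"
      using order_divides by blast
    then obtain P' where P': "P = [:-r,1:]^2 * P'"
      by (auto elim: dvdE)
    with root(3) have P'_nz: "P' \<noteq> 0"
      by auto
    have "degree P = 2 + degree P'"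
      using P' P'_nz by (simp add: degree_mult_eq degree_power_eq)
    moreover have "even (order x P')" if "x \<in> S" for x
    proof -
      have "even (order x ([:-r,1:]^2))"
        using order_power_n_n[of r 2] order_0I[of "[:-r,1:]^2" x] by (cases "x = r") auto
      then show ?thesis
        using order_mult[of "[:-r,1:]^2" P' x] P' root(3) less.prems that by auto
    qed
    ultimately have "\<exists>\<sigma>\<in>{-1,1}. \<forall>x\<in>S. \<sigma> * poly P' x \<ge> 0"
      using less.hyps[of P'] by simp
    then obtain \<sigma> where \<sigma>: "\<sigma> \<in> {-1,1}" "\<forall>x\<in>S. \<sigma> * poly P' x \<ge> 0"
      by blast
    have "\<sigma> * poly P x = (x - r)^2 * (\<sigma> * poly P' x)" for x
      using P' by (simp add: algebra_simps)
    then show ?thesis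
      using \<sigma> by (metis zero_le_mult_iff zero_le_power2)
  qed
qed

lemma poly_sign_change_at_odd_order:
  fixes P :: "real poly"
  assumes "P \<noteq> 0" "odd (order w P)"
  shows "\<exists>\<rho>\<in>{-1,1}. eventually (\<lambda>x. \<rho> * (x - w) * poly P x > 0) (at w)"
proof -
  define r where "r = order w P"
  obtain R where R: "P = [:-w,1:] ^ r * R" "\<not> [:-w,1:] dvd R"
    using order_decomp[OF assms(1)] unfolding r_def by blast
  define \<rho> where "\<rho> = sgn (poly R w)"
  have "poly R w \<noteq> 0"
    using R(2) by (simp add: poly_eq_0_iff_dvd)
  then have \<rho>: "\<rho> \<in> {-1,1}" "\<rho> * poly R w > 0"
    by (auto simp: \<rho>_def sgn_if)
  have "((\<lambda>x. \<rho> * poly R x) \<longlongrightarrow> \<rho> * poly R w) (at w)"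
    by (intro tendsto_intros)
  then have "eventually (\<lambda>x. \<rho> * poly R x > 0) (at w)"
    using \<rho>(2) order_tendstoD(1) by blast
  moreover have "eventually (\<lambda>x. x \<noteq> w) (at w)"
    by (simp add: eventually_at_filter)
  ultimately have "eventually (\<lambda>x. \<rho> * (x - w) * poly P x > 0) (at w)"
  proof eventually_elim
    case (elim x)
    have "(x - w) ^ Suc r > 0"
      using assms(2) elim(2) by (simp add: r_def zero_less_power_eq del: power_Suc)
    moreover have "poly P x = (x - w) ^ r * poly R x"
      by (subst R(1)) simp
    then have "\<rho> * (x - w) * poly P x = (x - w) ^ Suc r * (\<rho> * poly R x)"
      by (simp add: algebra_simps)
    ultimately show ?case
      using elim(1) by (metis mult_pos_pos)
  qed
  with \<rho>(1) show ?thesis by blast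
qed

lemma eventually_not_in_finite: "finite Z \<Longrightarrow> eventually (\<lambda>x. x \<notin> Z) (at (w::real))"
  using islimpt_finite islimpt_iff_eventually by blast

lemma Int_Ioo_insert_least:
  fixes X A :: "real set"
  assumes X: "X \<inter> {a<..<b} = insert w A" and least: "\<forall>x\<in>A. w < x"
  shows "w \<in> X" "a < w" "w < b" "{a<..<w} \<inter> X = {}"
    and "w < y \<Longrightarrow> y < b \<Longrightarrow> {w<..y} \<inter> X = {} \<Longrightarrow> X \<inter> {y<..<b} = A"
proof -
  have "w \<in> X \<inter> {a<..<b}"
    using X by blast
  then show w: "w \<in> X" "a < w" "w < b"
    by auto
  show "{a<..<w} \<inter> X = {}"
  proof (rule ccontr)
    assume "{a<..<w} \<inter> X \<noteq> {}"
    then obtain x where "x \<in> X" "a < x" "x < w"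
      by auto
    then have "x \<in> insert w A"
      using X w(3) by auto
    with \<open>x < w\<close> least show False
      by auto
  qed
  show "X \<inter> {y<..<b} = A" if y: "w < y" "y < b" "{w<..y} \<inter> X = {}"
  proof (intro equalityI subsetI)
    fix x assume x: "x \<in> X \<inter> {y<..<b}"
    then have "x \<in> X \<inter> {a<..<b}"
      using w(2) y(1) by auto
    with X x y(1) show "x \<in> A"
      by auto
  next
    fix x assume "x \<in> A"
    then have x: "x \<in> X \<inter> {a<..<b}" "w < x"
      using X least by auto
    then have "x \<notin> {w<..y}"
      using y(3) by blast
    with x show "x \<in> X \<inter> {y<..<b}"
      by auto
  qed
qed

section \<open>Strips of width \<pi> around the multiples of \<pi>\<close>

lemma cos_diff_int_pi: "cos (t - pi * of_int k) = cos (pi * of_int k) * cos t"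
  by (simp add: cos_diff)

lemma cos_neg_beyond_half_pi: "pi/2 < \<bar>s\<bar> \<Longrightarrow> \<bar>s\<bar> \<le> pi \<Longrightarrow> cos s < 0"
  using cos_gt_zero_pi[of "pi - \<bar>s\<bar>"] by (simp add: abs_if split: if_splits)

lemma cos_sign_strip:
  assumes \<sigma>: "\<sigma> \<in> {-1,1::real}" and cos: "\<sigma> * cos t \<ge> 0"
  shows "\<exists>k::int. \<sigma> * cos (pi * of_int k) > 0 \<and> \<bar>t - pi * of_int k\<bar> \<le> pi/2"
proof -
  \<comment> \<open>k is the integer nearest to t / \<pi> among those with cos (k\<pi>) = \<sigma>\<close>
  define c :: int where "c = (if \<sigma> = 1 then 0 else 1)"
  define s where "s = t / pi"
  define u where "u = (s - c) / 2"
  define k :: int where "k = 2 * round u + c"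
  have "real_of_int k = 2 * real_of_int (round u) + real_of_int c" "2 * u = s - c"
    by (simp_all add: k_def u_def)
  then have "\<bar>s - k\<bar> \<le> 1"
    using of_int_round_le[of u] of_int_round_ge[of u] by linarith
  then have "\<bar>t - pi * k\<bar> \<le> pi"
    by (simp add: s_def field_simps abs_le_iff)
  have "even k \<longleftrightarrow> \<sigma> = 1"
    by (simp add: k_def c_def)
  then have "cos (pi * of_int k) = \<sigma>"
    using \<sigma> cos_npi_int[of k] by auto
  then have "\<sigma> * cos (pi * of_int k) = 1" "\<sigma> * cos t = cos (t - pi * k)"
    using \<sigma> cos_npi_int[of k] by (auto simp: cos_diff_int_pi)
  then have "\<not> pi/2 < \<bar>t - pi * k\<bar>"
    using cos cos_neg_beyond_half_pi \<open>\<bar>t - pi * k\<bar> \<le> pi\<close> by fastforce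
  then show ?thesis
    using \<open>\<sigma> * cos (pi * of_int k) = 1\<close> by (intro exI[of _ k] conjI) linarith+
qed

lemma continuous_cos_sign_strip:
  fixes f :: "'a::topological_space \<Rightarrow> real"
  assumes S: "connected S" "x0 \<in> S" and f: "continuous_on S f" and \<sigma>: "\<sigma> \<in> {-1,1}"
    and sign: "\<forall>x\<in>S. \<sigma> * cos (f x) \<ge> 0"
  shows "\<exists>k::int. \<sigma> * cos (pi * of_int k) > 0 \<and> (\<forall>x\<in>S. \<bar>f x - pi * of_int k\<bar> \<le> pi/2)"
proof -
  obtain k :: int where k: "\<sigma> * cos (pi * of_int k) > 0" "\<bar>f x0 - pi * of_int k\<bar> \<le> pi/2"
    using cos_sign_strip[OF \<sigma>] sign S(2) by blast
  then have \<sigma>_cos: "\<sigma> * cos t = cos (t - pi * of_int k)" for t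
    using \<sigma> cos_npi_int[of k] by (auto simp: cos_diff_int_pi)
  define g where "g x = \<bar>f x - pi * of_int k\<bar>" for x
  have "connected (g ` S)"
    unfolding g_def using S(1) f by (intro connected_continuous_image continuous_intros)
  have "g x \<le> pi/2" if "x \<in> S" for x
  proof (rule ccontr)
    assume "\<not> g x \<le> pi/2"
    moreover have "{g x0..g x} \<subseteq> g ` S"
      using connected_contains_Icc[OF \<open>connected (g ` S)\<close>] S(2) that by blast
    moreover have "g x0 \<le> pi/2"
      using k(2) by (simp add: g_def)
    then have "min (g x) pi \<in> {g x0..g x}"
      using \<open>\<not> g x \<le> pi/2\<close> by (auto simp: min_def) (use pi_gt_zero in linarith)
    ultimately obtain y where y: "y \<in> S" "g y = min (g x) pi"
      by (metis imageE subsetD)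
    have "\<sigma> * cos (f y) = cos (g y)"
      by (simp add: \<sigma>_cos g_def)
    also have "\<dots> < 0"
      using y \<open>\<not> g x \<le> pi/2\<close> pi_gt_zero
      by (intro cos_neg_beyond_half_pi) (auto simp: g_def)
    finally show False
      using sign y(1) by fastforce
  qed
  then have "\<forall>x\<in>S. \<bar>f x - pi * of_int k\<bar> \<le> pi/2"
    by (simp add: g_def)
  with k(1) show ?thesis
    by blast
qed

lemma adjacent_strips:
  fixes k1 k2 :: int
  assumes "\<bar>t - pi * k1\<bar> \<le> pi/2" "\<bar>t - pi * k2\<bar> \<le> pi/2" "k1 \<noteq> k2"
  shows "\<exists>\<epsilon>\<in>{-1,1}. k2 = k1 + \<epsilon> \<and> t = pi * k1 + of_int \<epsilon> * (pi/2)"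
proof -
  have "\<bar>pi * k2 - pi * k1\<bar> \<le> pi"
    using assms(1,2) unfolding abs_le_iff by linarith
  then have "\<bar>real_of_int k2 - real_of_int k1\<bar> \<le> 1"
    by (simp add: right_diff_distrib[symmetric] abs_mult)
  then have "k2 = k1 + 1 \<or> k2 = k1 - 1"
    using assms(3) by linarith
  then show ?thesis
  proof
    assume "k2 = k1 + 1"
    then have "pi * k2 = pi * k1 + pi"
      by (simp add: distrib_left)
    with assms(1,2) \<open>k2 = k1 + 1\<close> show ?thesis
      unfolding abs_le_iff by (intro bexI[of _ 1]) auto
  next
    assume "k2 = k1 - 1"
    then have "pi * k2 = pi * k1 - pi"
      by (simp add: right_diff_distrib)
    with assms(1,2) \<open>k2 = k1 - 1\<close> show ?thesis
      unfolding abs_le_iff by (intro bexI[of _ "-1"]) auto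
  qed
qed

lemma tendsto_int_pi_if_in_strip:
  fixes f :: "'a \<Rightarrow> real"
  assumes sin: "((\<lambda>x. sin (f x)) \<longlongrightarrow> 0) F"
    and strip_index: "eventually (\<lambda>x. \<bar>f x - pi * of_int k\<bar> \<le> pi/2) F"
  shows "(f \<longlongrightarrow> pi * of_int k) F"
proof -
  have "((\<lambda>x. cos (pi * of_int k) * sin (f x)) \<longlongrightarrow> 0) F"
    using sin by (rule tendsto_mult_right_zero)
  moreover have "isCont arcsin 0"
    by (rule isCont_arcsin) auto
  ultimately have "((\<lambda>x. arcsin (cos (pi * of_int k) * sin (f x))) \<longlongrightarrow> arcsin 0) F"
    by (rule isCont_tendsto_compose[rotated])
  then have "((\<lambda>x. pi * of_int k + arcsin (cos (pi * of_int k) * sin (f x)))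
      \<longlongrightarrow> pi * of_int k + arcsin 0) F"
    by (rule tendsto_add[OF tendsto_const])
  then have "((\<lambda>x. pi * of_int k + arcsin (cos (pi * of_int k) * sin (f x))) \<longlongrightarrow> pi * of_int k) F"
    by (simp only: arcsin_0 add_0_right)
  moreover have "eventually (\<lambda>x. pi * of_int k + arcsin (cos (pi * of_int k) * sin (f x)) = f x) F"
    using strip_index
  proof eventually_elim
    case (elim x)
    have "cos (pi * of_int k) * sin (f x) = sin (f x - pi * of_int k)"
      by (simp add: sin_diff)
    also have "arcsin \<dots> = f x - pi * of_int k"
      using elim unfolding abs_le_iff by (intro arcsin_sin) linarith+
    finally show ?case
      by simp
  qed
  ultimately show ?thesis
    by (rule Lim_transform_eventually)
qed

section \<open>Derivative of a continuous argument\<close>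

lemma deriv_pos_if_increase:
  fixes f d :: "real \<Rightarrow> real"
  assumes f: "continuous_on {a..b} f"
    and d: "\<And>z. z \<in> {a<..<b} \<Longrightarrow> (f has_real_derivative d z) (at z)"
    and d_cont: "continuous_on {a<..<b} d" and d_nz: "\<forall>z\<in>{a<..<b}. d z \<noteq> 0"
    and xy: "a \<le> x" "x < y" "y \<le> b" "f x < f y"
  shows "\<forall>z\<in>{a<..<b}. d z > 0"
proof -
  have "continuous_on {x..y} f"
    using f by (rule continuous_on_subset) (use xy in auto)
  moreover have "f differentiable (at z)" if "x < z" "z < y" for z
    using d[of z] that xy by (auto simp: real_differentiable_def)
  ultimately obtain l z where z: "x < z" "z < y" "DERIV f z :> l" "f y - f x = (y - x) * l"
    using MVT[OF xy(2)] by blast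
  have "l > 0"
    using z(4) xy(2,4) by (metis diff_gt_0_iff_gt zero_less_mult_pos)
  have z_in: "z \<in> {a<..<b}"
    using z xy by auto
  then have "d z > 0"
    using DERIV_unique[OF d z(3)] \<open>l > 0\<close> by simp
  obtain \<sigma> where "\<sigma> \<in> {-1,1}" and \<sigma>: "\<forall>x\<in>{a<..<b}. \<sigma> * d x > 0"
    using connected_nonvanishing_sign[OF connected_Ioo d_cont d_nz] by blast
  have "\<sigma> * d z > 0"
    using \<sigma> z_in by blast
  with \<open>d z > 0\<close> \<open>\<sigma> \<in> {-1,1}\<close> have "\<sigma> = 1"
    by (auto simp: zero_less_mult_iff)
  with \<sigma> show ?thesis
    by simp
qed

lemma cis_eq_imp_eventually_eq:
  fixes \<phi> \<psi> :: "real \<Rightarrow> real"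
  assumes "isCont \<phi> x0" "isCont \<psi> x0" "\<phi> x0 = \<psi> x0" "\<And>x. cis (\<phi> x) = cis (\<psi> x)"
  shows "eventually (\<lambda>x. \<phi> x = \<psi> x) (nhds x0)"
proof -
  have "((\<lambda>x. \<phi> x - \<psi> x) \<longlongrightarrow> 0) (at x0)"
    using isCont_diff[OF assms(1,2)] assms(3) by (simp add: isCont_def)
  then have "eventually (\<lambda>x. \<bar>\<phi> x - \<psi> x\<bar> < 2 * pi) (at x0)"
    using tendstoD[of _ 0 _ "2 * pi"] pi_gt_zero by (force simp: dist_real_def)
  moreover have "\<phi> x = \<psi> x" if "\<bar>\<phi> x - \<psi> x\<bar> < 2 * pi" for x
  proof -
    have "cos (\<phi> x - \<psi> x) = 1"
      using arg_cong[OF assms(4)[of x], of Re] arg_cong[OF assms(4)[of x], of Im]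
      by (simp add: cos_diff power2_eq_square[symmetric])
    then obtain n :: int where n: "\<phi> x - \<psi> x = of_int n * 2 * pi"
      using cos_one_2pi_int by blast
    with that have "\<bar>of_int n\<bar> < (1::real)"
      by (simp add: abs_mult)
    then have "n = 0"
      by linarith
    with n show ?thesis
      by simp
  qed
  ultimately show ?thesis
    using assms(3) by (auto simp: eventually_nhds_conv_at elim: eventually_mono)
qed

text \<open>Locally the branch agrees with a shifted branch of the logarithm of the curve.\<close>
lemma continuous_arg_has_real_derivative:
  fixes g :: "real \<Rightarrow> complex" and \<phi> :: "real \<Rightarrow> real"
  assumes \<phi>: "isCont \<phi> x0" and arg: "\<And>x. cis (\<phi> x) = sgn (g x)" and nz: "\<And>x. g x \<noteq> 0"
    and g: "(g has_vector_derivative g') (at x0)"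
  shows "(\<phi> has_real_derivative Im (g' / g x0)) (at x0)"
proof -
  define \<psi> where "\<psi> x = \<phi> x0 + Im (Ln (g x / g x0))" for x
  have "(Ln has_field_derivative 1) (at (g x0 / g x0))"
    using has_field_derivative_Ln[of 1] nz[of x0] by simp
  from field_vector_diff_chain_at[OF has_vector_derivative_divide[OF g] this]
  have "((\<lambda>x. Ln (g x / g x0)) has_vector_derivative g' / g x0) (at x0)"
    by (simp add: o_def)
  from bounded_linear.has_vector_derivative[OF bounded_linear_Im this]
  have \<psi>_deriv: "(\<psi> has_real_derivative Im (g' / g x0)) (at x0)"
    unfolding \<psi>_def has_real_derivative_iff_has_vector_derivative
    using has_vector_derivative_add[OF has_vector_derivative_const] by fastforce
  have "cis (\<psi> x) = cis (\<phi> x)" for x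
  proof -
    have "cis (Im (Ln (g x / g x0))) = sgn (g x / g x0)"
      using nz cis_Arg[of "g x / g x0"] Arg_eq_Im_Ln[of "g x / g x0"] by simp
    then have "cis (\<psi> x) = sgn (g x0) * sgn (g x / g x0)"
      by (simp add: \<psi>_def cis_mult[symmetric] arg)
    also have "\<dots> = sgn (g x0 * (g x / g x0))"
      by (simp only: sgn_mult)
    also have "\<dots> = sgn (g x)"
      using nz[of x0] by simp
    finally show ?thesis
      by (simp add: arg)
  qed
  then have "eventually (\<lambda>x. \<psi> x = \<phi> x) (nhds x0)"
  proof (rule cis_eq_imp_eventually_eq[rotated 3])
    show "isCont \<psi> x0"
      using \<psi>_deriv by (rule DERIV_isCont)
    show "\<psi> x0 = \<phi> x0"
      using nz[of x0] by (simp add: \<psi>_def)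
  qed (use \<phi> in auto)
  then show ?thesis
    using \<psi>_deriv DERIV_cong_ev by blast
qed

section \<open>A continuous branch of the argument along the imaginary axis\<close>

locale imag_axis_arg_branch =
  fixes p :: "complex poly" and \<phi> :: "real \<Rightarrow> real"
  assumes lead_coeff_real: "lead_coeff p \<in> \<real>" and lead_coeff_pos: "Re (lead_coeff p) > 0"
    and no_imag_axis_roots: "\<forall>w::real. poly p (\<i> * complex_of_real w) \<noteq> 0"
    and continuous_phi: "continuous_on UNIV \<phi>"
    and cis_phi_eq: "\<forall>w. cis (\<phi> w) = imag_axis_curve p w / complex_of_real (cmod (imag_axis_curve p w))"
begin

abbreviation q :: "complex poly" where "q \<equiv> imag_axis_poly p"
abbreviation \<gamma> :: "real \<Rightarrow> complex" where "\<gamma> \<equiv> imag_axis_curve p"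
abbreviation F :: "real poly" where "F \<equiv> f0_poly p"
abbreviation X :: "real set" where "X \<equiv> odd_crossings p"

lemma curve_nonzero: "\<gamma> x \<noteq> 0"
  using no_imag_axis_roots by (simp add: imag_axis_curve_def)

lemma cis_phi: "cis (\<phi> x) = sgn (\<gamma> x)"
  using cis_phi_eq by (simp add: sgn_div_norm divide_inverse scaleR_conv_of_real mult.commute)

lemma cos_phi: "cos (\<phi> x) = poly F x / cmod (\<gamma> x)"
  using arg_cong[OF cis_phi[of x], of Re] by (simp add: poly_f0_poly)

lemma sin_phi: "sin (\<phi> x) = Im (sgn (poly q (complex_of_real x)))"
  using arg_cong[OF cis_phi[of x], of Im] by (simp add: imag_axis_curve_eq_poly)

lemma cos_phi_sign: "\<sigma> * poly F x \<ge> 0 \<Longrightarrow> \<sigma> * cos (\<phi> x) \<ge> 0"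
  using curve_nonzero[of x] by (simp add: cos_phi)

lemma F_nonzero: "F \<noteq> 0"
  using lead_coeff_pos f0_poly_nonzero by auto

lemma crossing_is_root: "w \<in> X \<Longrightarrow> poly F w = 0"
  using order_root[of F w] by (auto simp: odd_crossings_def)

lemma finite_crossings: "finite X"
proof -
  have "X \<subseteq> {x. poly F x = 0}"
    using crossing_is_root by blast
  then show ?thesis
    using poly_roots_finite[OF F_nonzero] by (rule finite_subset)
qed

lemma phi_has_real_derivative_curve:
  "(\<phi> has_real_derivative Im (poly (pderiv q) (complex_of_real x) / \<gamma> x)) (at x)"
  unfolding imag_axis_curve_eq_poly
proof (rule continuous_arg_has_real_derivative)
  show "isCont \<phi> x"
    using continuous_phi by (simp add: continuous_on_eq_continuous_at)
  show "((\<lambda>x. poly q (complex_of_real x)) has_vector_derivative poly (pderiv q) (complex_of_real x)) (at x)"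
    by (rule has_vector_derivative_real_field[OF poly_DERIV])
qed (use cis_phi curve_nonzero in \<open>simp_all add: imag_axis_curve_eq_poly\<close>)

definition N :: "real poly" where
  "N = map_poly Im (pderiv q * map_poly cnj q)"

lemma deriv_phi: "deriv \<phi> x = poly N x / (cmod (\<gamma> x))\<^sup>2"
proof -
  have "complex_of_real ((cmod (\<gamma> x))\<^sup>2) = \<gamma> x * cnj (\<gamma> x)"
    by (rule complex_norm_square)
  then have "poly (pderiv q) (complex_of_real x) / \<gamma> x
      = poly (pderiv q) (complex_of_real x) * cnj (\<gamma> x) / complex_of_real ((cmod (\<gamma> x))\<^sup>2)"
    using curve_nonzero[of x] by (simp add: field_simps)
  then show ?thesis
    using DERIV_imp_deriv[OF phi_has_real_derivative_curve]
    by (simp add: N_def poly_map_poly_Im imag_axis_curve_eq_poly)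
qed

lemma phi_has_deriv: "(\<phi> has_real_derivative deriv \<phi> x) (at x)"
  using phi_has_real_derivative_curve DERIV_imp_deriv by metis

lemma continuous_on_deriv_phi: "continuous_on S (deriv \<phi>)"
proof -
  have "continuous_on S (\<lambda>x. poly N x / (cmod (poly q (complex_of_real x)))\<^sup>2)"
    using curve_nonzero by (intro continuous_intros) (auto simp: imag_axis_curve_eq_poly)
  then show ?thesis
    by (simp add: deriv_phi[abs_def] imag_axis_curve_eq_poly)
qed

lemma sgn_deriv_phi: "sgn (deriv \<phi> x) = sgn (poly N x)"
  using curve_nonzero[of x] by (simp add: deriv_phi sgn_divide)

lemma N_nonzero:
  assumes "X \<noteq> {}"
  shows "N \<noteq> 0"
proof
  assume "N = 0"
  then have "(\<phi> has_real_derivative 0) (at x)" for x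
    using phi_has_deriv[of x] by (simp add: deriv_phi)
  then have const: "\<phi> x = \<phi> y" for x y
    by (intro DERIV_isconst_all) auto
  obtain w where "w \<in> X"
    using assms by auto
  then have "cos (\<phi> w) = 0"
    by (simp add: cos_phi crossing_is_root)
  then have "cos (\<phi> x) = 0" for x
    using const by metis
  then have "poly F x = 0" for x
    using curve_nonzero[of x] cos_phi[of x] by simp
  then show False
    using F_nonzero poly_all_0_iff_0 by blast
qed

definition strip_index :: "real \<Rightarrow> int" where
  "strip_index x = round (\<phi> x / pi)"

lemma strip_index_eqI:
  assumes "\<bar>\<phi> x - pi * of_int k\<bar> \<le> pi/2" "poly F x \<noteq> 0"
  shows "\<bar>\<phi> x - pi * of_int k\<bar> < pi/2" "strip_index x = k"
proof -
  show strict: "\<bar>\<phi> x - pi * of_int k\<bar> < pi/2"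
  proof (rule ccontr)
    assume "\<not> ?thesis"
    then have "\<phi> x - pi * of_int k = pi/2 \<or> \<phi> x - pi * of_int k = -(pi/2)"
      using assms(1) by linarith
    then have "cos (\<phi> x - pi * of_int k) = 0"
      by (metis cos_minus cos_pi_half)
    then have "cos (\<phi> x) = 0"
      by (simp add: cos_diff_int_pi split: if_split_asm)
    then show False
      using assms(2) curve_nonzero[of x] by (simp add: cos_phi)
  qed
  have "\<bar>\<phi> x / pi - of_int k\<bar> = \<bar>\<phi> x - pi * of_int k\<bar> / pi"
    by (simp add: field_simps)
  also have "\<dots> < 1/2"
    using strict by (simp add: field_simps)
  finally show "strip_index x = k"
    unfolding strip_index_def by (rule round_unique')
qed

lemma strip_on_crossing_free:
  assumes "connected S" "S \<inter> X = {}" "b \<in> S" "poly F b \<noteq> 0"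
  shows "\<forall>x\<in>S. \<bar>\<phi> x - pi * of_int (strip_index b)\<bar> \<le> pi/2"
proof -
  have "\<forall>r\<in>S. even (order r F)"
    using assms(2) by (auto simp: odd_crossings_def)
  then obtain \<sigma> where \<sigma>: "\<sigma> \<in> {-1,1}" "\<forall>x\<in>S. \<sigma> * poly F x \<ge> 0"
    using poly_sign_if_even_orders[OF assms(1)] by blast
  then have "\<forall>x\<in>S. \<sigma> * cos (\<phi> x) \<ge> 0"
    using cos_phi_sign by blast
  moreover have "continuous_on S \<phi>"
    using continuous_phi continuous_on_subset by blast
  ultimately obtain k where k: "\<forall>x\<in>S. \<bar>\<phi> x - pi * of_int k\<bar> \<le> pi/2"
    using continuous_cos_sign_strip[OF assms(1,3) _ \<sigma>(1)] by blast
  then have "strip_index b = k"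
    using strip_index_eqI(2)[OF _ assms(4)] assms(3) by blast
  with k show ?thesis
    by simp
qed

lemma strip_index_eq_on_crossing_free:
  assumes "connected S" "S \<inter> X = {}" "a \<in> S" "b \<in> S" "poly F a \<noteq> 0" "poly F b \<noteq> 0"
  shows "strip_index a = strip_index b"
  using strip_index_eqI(2)[OF strip_on_crossing_free[OF assms(1,2,4,6), rule_format, OF assms(3)]
      assms(5)] .

abbreviation crossing_sign :: "real \<Rightarrow> real" where
  "crossing_sign w \<equiv> Lim (at w) (\<lambda>x. sgn (deriv \<phi> x))"

lemma crossing_neighbourhood:
  assumes "w \<in> X"
  obtains \<delta> \<rho> where "\<delta> > 0" "\<rho> \<in> {-1,1}"
    "\<And>x. x \<noteq> w \<Longrightarrow> \<bar>x - w\<bar> < \<delta> \<Longrightarrow> \<rho> * (x - w) * poly F x > 0 \<and> poly N x \<noteq> 0 \<and> x \<notin> X"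
proof -
  have "odd (order w F)"
    using assms by (simp add: odd_crossings_def)
  then obtain \<rho> where \<rho>: "\<rho> \<in> {-1,1}" "eventually (\<lambda>x. \<rho> * (x - w) * poly F x > 0) (at w)"
    using poly_sign_change_at_odd_order[OF F_nonzero] by blast
  have "finite {x. poly N x = 0}"
    using poly_roots_finite[OF N_nonzero] assms by blast
  from eventually_conj[OF \<rho>(2) eventually_conj[OF eventually_not_in_finite[OF this]
        eventually_not_in_finite[OF finite_crossings]]]
  obtain \<delta> where "\<delta> > 0"
    "\<forall>x. x \<noteq> w \<and> dist x w < \<delta> \<longrightarrow> \<rho> * (x - w) * poly F x > 0 \<and> poly N x \<noteq> 0 \<and> x \<notin> X"
    unfolding eventually_at by auto
  with \<rho>(1) that show ?thesis
    by (auto simp: dist_real_def)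
qed

lemma crossing_one_sided_strips:
  assumes w: "w \<in> X" and \<delta>: "\<delta> > 0" and \<rho>: "\<rho> \<in> {-1,1}"
    and sign: "\<And>x. x \<noteq> w \<Longrightarrow> \<bar>x - w\<bar> < \<delta> \<Longrightarrow> \<rho> * (x - w) * poly F x > 0"
  shows "\<exists>k1 k2 :: int. k1 \<noteq> k2 \<and> (\<forall>x\<in>{w-\<delta><..w}. \<bar>\<phi> x - pi * of_int k1\<bar> \<le> pi/2)
    \<and> (\<forall>x\<in>{w..<w+\<delta>}. \<bar>\<phi> x - pi * of_int k2\<bar> \<le> pi/2)"
proof -
  have product: "(x - w) * (\<rho> * poly F x) > 0" if "x \<noteq> w" "\<bar>x - w\<bar> < \<delta>" for x
    using sign[OF that] by (simp add: algebra_simps)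
  have "poly F w = 0"
    using w by (rule crossing_is_root)
  have left_cos: "\<forall>x\<in>{w-\<delta><..w}. -\<rho> * cos (\<phi> x) \<ge> 0"
  proof
    fix x assume "x \<in> {w-\<delta><..w}"
    then have "-\<rho> * poly F x \<ge> 0"
      using product[of x] \<open>poly F w = 0\<close>
      by (cases "x = w") (auto simp: zero_less_mult_iff zero_le_mult_iff)
    then show "-\<rho> * cos (\<phi> x) \<ge> 0"
      by (rule cos_phi_sign)
  qed
  have right_cos: "\<forall>x\<in>{w..<w+\<delta>}. \<rho> * cos (\<phi> x) \<ge> 0"
  proof
    fix x assume "x \<in> {w..<w+\<delta>}"
    then have "\<rho> * poly F x \<ge> 0"
      using product[of x] \<open>poly F w = 0\<close>
      by (cases "x = w") (auto simp: zero_less_mult_iff zero_le_mult_iff)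
    then show "\<rho> * cos (\<phi> x) \<ge> 0"
      by (rule cos_phi_sign)
  qed
  have cont: "continuous_on S \<phi>" for S
    using continuous_phi continuous_on_subset by blast
  have "w \<in> {w-\<delta><..w}" "w \<in> {w..<w+\<delta>}" "-\<rho> \<in> {-1,1}"
    using \<delta> \<rho> by auto
  then obtain k1 k2 where
    k1: "-\<rho> * cos (pi * of_int k1) > 0" "\<forall>x\<in>{w-\<delta><..w}. \<bar>\<phi> x - pi * k1\<bar> \<le> pi/2" and
    k2: "\<rho> * cos (pi * of_int k2) > 0" "\<forall>x\<in>{w..<w+\<delta>}. \<bar>\<phi> x - pi * k2\<bar> \<le> pi/2"
    using continuous_cos_sign_strip[OF connected_Ioc _ cont _ left_cos]
      continuous_cos_sign_strip[OF connected_Ico _ cont \<rho> right_cos] by metis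
  \<comment> \<open>cos (k1 \<pi>) and cos (k2 \<pi>) have opposite signs\<close>
  then have "k1 \<noteq> k2"
    by auto
  with k1(2) k2(2) show ?thesis
    by (intro exI conjI)
qed

lemma crossing_strips:
  assumes w: "w \<in> X" and \<delta>: "\<delta> > 0" and \<rho>: "\<rho> \<in> {-1,1}"
    and sign: "\<And>x. x \<noteq> w \<Longrightarrow> \<bar>x - w\<bar> < \<delta> \<Longrightarrow> \<rho> * (x - w) * poly F x > 0"
  shows "\<exists>\<epsilon>\<in>{-1,1}. \<exists>k.
    (\<forall>x\<in>{w-\<delta><..<w}. strip_index x = k \<and> of_int \<epsilon> * \<phi> x < of_int \<epsilon> * \<phi> w) \<and>
    (\<forall>x\<in>{w<..<w+\<delta>}. strip_index x = k + \<epsilon> \<and> of_int \<epsilon> * \<phi> w < of_int \<epsilon> * \<phi> x)"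
proof -
  obtain k1 k2 :: int where "k1 \<noteq> k2" and
    k1: "\<forall>x\<in>{w-\<delta><..w}. \<bar>\<phi> x - pi * k1\<bar> \<le> pi/2" and
    k2: "\<forall>x\<in>{w..<w+\<delta>}. \<bar>\<phi> x - pi * k2\<bar> \<le> pi/2"
    using crossing_one_sided_strips[OF assms] by blast
  moreover have "w \<in> {w-\<delta><..w}" "w \<in> {w..<w+\<delta>}"
    using \<delta> by auto
  ultimately obtain \<epsilon> where \<epsilon>: "\<epsilon> \<in> {-1,1}" "k2 = k1 + \<epsilon>" "\<phi> w = pi * k1 + of_int \<epsilon> * (pi/2)"
    using adjacent_strips[of "\<phi> w" k1 k2] by blast
  have F_nonzero_near: "poly F x \<noteq> 0" if "x \<in> {w-\<delta><..<w} \<union> {w<..<w+\<delta>}" for x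
    using sign[of x] that by auto
  have L: "strip_index x = k1 \<and> of_int \<epsilon> * \<phi> x < of_int \<epsilon> * \<phi> w" if x: "x \<in> {w-\<delta><..<w}" for x
  proof -
    from x have "\<bar>\<phi> x - pi * k1\<bar> \<le> pi/2" "poly F x \<noteq> 0"
      using k1 F_nonzero_near[of x] by auto
    then have "\<bar>\<phi> x - pi * k1\<bar> < pi/2" "strip_index x = k1"
      by (rule strip_index_eqI)+
    with \<epsilon>(1,3) show ?thesis
      unfolding abs_less_iff by auto
  qed
  have R: "strip_index x = k1 + \<epsilon> \<and> of_int \<epsilon> * \<phi> w < of_int \<epsilon> * \<phi> x" if x: "x \<in> {w<..<w+\<delta>}" for x
  proof -
    from x have "\<bar>\<phi> x - pi * k2\<bar> \<le> pi/2" "poly F x \<noteq> 0"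
      using k2 F_nonzero_near[of x] by auto
    then have "\<bar>\<phi> x - pi * k2\<bar> < pi/2" "strip_index x = k2"
      by (rule strip_index_eqI)+
    with \<epsilon> show ?thesis
      unfolding abs_less_iff by (auto simp: distrib_left)
  qed
  show ?thesis
    using \<epsilon>(1) by (intro bexI[of _ \<epsilon>] exI[of _ k1] conjI ballI L R)
qed

lemma deriv_phi_sign_if_increase:
  assumes "\<forall>z\<in>{a<..<b}. poly N z \<noteq> 0" "a \<le> x" "x < y" "y \<le> b" "c * \<phi> x < c * \<phi> y"
  shows "\<forall>z\<in>{a<..<b}. c * deriv \<phi> z > 0"
proof (rule deriv_pos_if_increase[of a b "\<lambda>x. c * \<phi> x" "\<lambda>z. c * deriv \<phi> z" x y])
  show "continuous_on {a..b} (\<lambda>x. c * \<phi> x)"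
    using continuous_phi by (intro continuous_intros) (auto intro: continuous_on_subset)
  show "((\<lambda>x. c * \<phi> x) has_real_derivative c * deriv \<phi> z) (at z)" for z
    using phi_has_deriv by (rule DERIV_cmult)
  show "continuous_on {a<..<b} (\<lambda>z. c * deriv \<phi> z)"
    using continuous_on_deriv_phi by (intro continuous_intros)
  have "deriv \<phi> z \<noteq> 0" if "z \<in> {a<..<b}" for z
    using assms(1) that sgn_deriv_phi[of z] by (metis sgn_eq_0_iff)
  moreover have "c \<noteq> 0"
    using assms(5) by auto
  ultimately show "\<forall>z\<in>{a<..<b}. c * deriv \<phi> z \<noteq> 0"
    by simp
qed (use assms in auto)

lemma sgn_deriv_phi_near_crossing:
  assumes \<delta>: "\<delta> > 0" and \<epsilon>: "\<epsilon> \<in> {-1,1::int}"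
    and N: "\<And>z. z \<noteq> w \<Longrightarrow> \<bar>z - w\<bar> < \<delta> \<Longrightarrow> poly N z \<noteq> 0"
    and left: "\<And>x. x \<in> {w-\<delta><..<w} \<Longrightarrow> of_int \<epsilon> * \<phi> x < of_int \<epsilon> * \<phi> w"
    and right: "\<And>x. x \<in> {w<..<w+\<delta>} \<Longrightarrow> of_int \<epsilon> * \<phi> w < of_int \<epsilon> * \<phi> x"
  shows "eventually (\<lambda>x. sgn (deriv \<phi> x) = of_int \<epsilon>) (at w)"
proof -
  have N_near: "poly N z \<noteq> 0" if "z \<in> {w-\<delta><..<w} \<union> {w<..<w+\<delta>}" for z
    using N[of z] that by (auto simp: abs_less_iff)
  have "\<forall>z\<in>{w-\<delta><..<w}. of_int \<epsilon> * deriv \<phi> z > 0"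
    by (rule deriv_phi_sign_if_increase[where x = "w - \<delta>/2" and y = w])
      (use N_near left[of "w - \<delta>/2"] \<delta> in auto)
  moreover have "\<forall>z\<in>{w<..<w+\<delta>}. of_int \<epsilon> * deriv \<phi> z > 0"
    by (rule deriv_phi_sign_if_increase[where x = w and y = "w + \<delta>/2"])
      (use N_near right[of "w + \<delta>/2"] \<delta> in auto)
  ultimately have "of_int \<epsilon> * deriv \<phi> x > 0" if "x \<noteq> w" "\<bar>x - w\<bar> < \<delta>" for x
    using that by (cases "x < w") (auto simp: abs_less_iff)
  then have "sgn (deriv \<phi> x) = of_int \<epsilon>" if "x \<noteq> w" "\<bar>x - w\<bar> < \<delta>" for x
    using that \<epsilon> by (fastforce simp: sgn_if zero_less_mult_iff)
  then show ?thesis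
    unfolding eventually_at using \<delta> by (auto simp: dist_real_def)
qed

lemma crossing_sign_strip_jump:
  assumes "w \<in> X"
  obtains \<delta> where "\<delta> > 0" "\<And>x. x \<noteq> w \<Longrightarrow> \<bar>x - w\<bar> < \<delta> \<Longrightarrow> poly F x \<noteq> 0 \<and> x \<notin> X"
    "((\<lambda>x. sgn (deriv \<phi> x)) \<longlongrightarrow> crossing_sign w) (at w)"
    "\<And>x y. x \<in> {w-\<delta><..<w} \<Longrightarrow> y \<in> {w<..<w+\<delta>} \<Longrightarrow>
      of_int (strip_index y) - of_int (strip_index x) = crossing_sign w"
proof -
  obtain \<delta> \<rho> where \<delta>: "\<delta> > 0" "\<rho> \<in> {-1,1}" and near:
    "\<And>x. x \<noteq> w \<Longrightarrow> \<bar>x - w\<bar> < \<delta> \<Longrightarrow> \<rho> * (x - w) * poly F x > 0 \<and> poly N x \<noteq> 0 \<and> x \<notin> X"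
    by (rule crossing_neighbourhood[OF assms]) iprover
  obtain \<epsilon> k where \<epsilon>: "\<epsilon> \<in> {-1,1}" and
    left: "\<And>x. x \<in> {w-\<delta><..<w} \<Longrightarrow> strip_index x = k \<and> of_int \<epsilon> * \<phi> x < of_int \<epsilon> * \<phi> w" and
    right: "\<And>x. x \<in> {w<..<w+\<delta>} \<Longrightarrow> strip_index x = k + \<epsilon> \<and> of_int \<epsilon> * \<phi> w < of_int \<epsilon> * \<phi> x"
    using crossing_strips[OF assms \<delta> conjunct1[OF near]] by blast
  have "eventually (\<lambda>x. sgn (deriv \<phi> x) = of_int \<epsilon>) (at w)"
    using \<delta>(1) \<epsilon> conjunct1[OF conjunct2[OF near]] conjunct2[OF left] conjunct2[OF right]
    by (rule sgn_deriv_phi_near_crossing)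
  then have lim: "((\<lambda>x. sgn (deriv \<phi> x)) \<longlongrightarrow> of_int \<epsilon>) (at w)"
    by (rule tendsto_eventually)
  then have sign: "crossing_sign w = of_int \<epsilon>"
    by (intro tendsto_Lim) auto
  show ?thesis
  proof (rule that[OF \<delta>(1)])
    show "poly F x \<noteq> 0 \<and> x \<notin> X" if "x \<noteq> w" "\<bar>x - w\<bar> < \<delta>" for x
      using near[OF that] by auto
    show "((\<lambda>x. sgn (deriv \<phi> x)) \<longlongrightarrow> crossing_sign w) (at w)"
      using lim by (simp only: sign)
    show "of_int (strip_index y) - of_int (strip_index x) = crossing_sign w"
      if "x \<in> {w-\<delta><..<w}" "y \<in> {w<..<w+\<delta>}" for x y
      using left[OF that(1)] right[OF that(2)] by (simp add: sign)
  qed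
qed

lemma tendsto_sgn_deriv_phi_crossing:
  "w \<in> X \<Longrightarrow> ((\<lambda>x. sgn (deriv \<phi> x)) \<longlongrightarrow> crossing_sign w) (at w)"
  by (rule crossing_sign_strip_jump)

lemma strip_index_jump_past_crossing:
  assumes w: "w \<in> X" and a: "a < w" "poly F a \<noteq> 0" "{a<..<w} \<inter> X = {}" and "w < b"
  obtains y where "w < y" "y < b" "poly F y \<noteq> 0" "{w<..y} \<inter> X = {}"
    "of_int (strip_index y) - of_int (strip_index a) = crossing_sign w"
proof -
  obtain \<delta> where \<delta>: "\<delta> > 0" and near: "\<And>x. x \<noteq> w \<Longrightarrow> \<bar>x - w\<bar> < \<delta> \<Longrightarrow> poly F x \<noteq> 0 \<and> x \<notin> X"
    and jump: "\<And>x y. x \<in> {w-\<delta><..<w} \<Longrightarrow> y \<in> {w<..<w+\<delta>} \<Longrightarrow>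
      of_int (strip_index y) - of_int (strip_index x) = crossing_sign w"
    by (rule crossing_sign_strip_jump[OF w]) iprover
  define e where "e = min \<delta> (min (w - a) (b - w)) / 2"
  have e: "0 < e" "e < \<delta>" "e < w - a" "e < b - w"
    using \<delta> a(1) \<open>w < b\<close> by (auto simp: e_def)
  have "{a..w - e} \<inter> X = {}"
  proof -
    have "x \<notin> X" if "a \<le> x" "x \<le> w - e" for x
    proof (cases "x = a")
      case True
      then show ?thesis
        using a(2) crossing_is_root by blast
    next
      case False
      then have "x \<in> {a<..<w}"
        using that e(1) by auto
      then show ?thesis
        using a(3) by blast
    qed
    then show ?thesis
      by auto
  qed
  moreover have "poly F (w - e) \<noteq> 0"
    using near[of "w - e"] e by auto
  ultimately have "strip_index a = strip_index (w - e)"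
    using strip_index_eq_on_crossing_free[of "{a..w - e}" a "w - e"] a(2) e by auto
  moreover have "of_int (strip_index (w + e)) - of_int (strip_index (w - e)) = crossing_sign w"
    using jump e by auto
  ultimately have "of_int (strip_index (w + e)) - of_int (strip_index a) = crossing_sign w"
    by simp
  moreover have "{w<..w + e} \<inter> X = {}" "poly F (w + e) \<noteq> 0"
    using near e by auto
  ultimately show ?thesis
    using e by (intro that[of "w + e"]) auto
qed

lemma strip_index_difference:
  assumes "a < b" "poly F a \<noteq> 0" "poly F b \<noteq> 0"
  shows "of_int (strip_index b) - of_int (strip_index a) = (\<Sum>w\<in>X \<inter> {a<..<b}. crossing_sign w)"
proof -
  have induct: "\<forall>a b. a < b \<longrightarrow> poly F a \<noteq> 0 \<longrightarrow> poly F b \<noteq> 0 \<longrightarrow> X \<inter> {a<..<b} = Y \<longrightarrow>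
      of_int (strip_index b) - of_int (strip_index a) = (\<Sum>w\<in>Y. crossing_sign w)" if "finite Y" for Y
    using that
  proof (induction Y rule: finite_linorder_min_induct)
    case empty
    show ?case
    proof (intro allI impI)
      fix a b assume ab: "a < b" "poly F a \<noteq> 0" "poly F b \<noteq> 0" "X \<inter> {a<..<b} = {}"
      have "x \<notin> X" if "a \<le> x" "x \<le> b" for x
        using that ab crossing_is_root[of a] crossing_is_root[of b] by (cases "x = a \<or> x = b") auto
      then have "{a..b} \<inter> X = {}"
        by auto
      then show "of_int (strip_index b) - of_int (strip_index a) = (\<Sum>w\<in>{}. crossing_sign w)"
        using strip_index_eq_on_crossing_free[of "{a..b}" a b] ab by simp
    qed
  next
    case (insert w A)
    show ?case
    proof (intro allI impI)
      fix a b assume ab: "a < b" "poly F a \<noteq> 0" "poly F b \<noteq> 0" "X \<inter> {a<..<b} = insert w A"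
      note parts = Int_Ioo_insert_least[OF ab(4) insert.hyps(2)]
      obtain y where y: "w < y" "y < b" "poly F y \<noteq> 0" "{w<..y} \<inter> X = {}"
        and jump: "of_int (strip_index y) - of_int (strip_index a) = crossing_sign w"
        by (rule strip_index_jump_past_crossing[OF parts(1,2) ab(2) parts(4,3)]) iprover
      have "of_int (strip_index b) - of_int (strip_index y) = (\<Sum>w\<in>A. crossing_sign w)"
        using insert.IH y(2,3) ab(3) parts(5)[OF y(1,2,4)] by simp
      moreover have "w \<notin> A"
        using insert.hyps(2) by auto
      ultimately show "of_int (strip_index b) - of_int (strip_index a) = (\<Sum>w\<in>insert w A. crossing_sign w)"
        using jump insert.hyps(1) by simp
    qed
  qed
  have "finite (X \<inter> {a<..<b})"
    using finite_crossings by simp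
  from induct[OF this] assms show ?thesis
    by simp
qed

lemma tendsto_phi_beyond_crossings:
  assumes "connected S" "S \<inter> X = {}" "b \<in> S" "poly F b \<noteq> 0"
    and "G \<le> at_infinity" "eventually (\<lambda>x. x \<in> S) G"
  shows "(\<phi> \<longlongrightarrow> pi * of_int (strip_index b)) G"
proof (rule tendsto_int_pi_if_in_strip)
  have "lead_coeff q \<noteq> 0" "lead_coeff q \<in> \<real>"
    unfolding lead_coeff_imag_axis_poly using lead_coeff_pos lead_coeff_real by auto
  then have "((\<lambda>x. Im (sgn (poly q (complex_of_real x)))) \<longlongrightarrow> 0) at_infinity"
    using tendsto_Im_sgn_poly_at_infinity[of q] by fastforce
  then show "((\<lambda>x. sin (\<phi> x)) \<longlongrightarrow> 0) G"
    unfolding sin_phi using assms(5) by (rule tendsto_mono[rotated])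
  show "eventually (\<lambda>x. \<bar>\<phi> x - pi * of_int (strip_index b)\<bar> \<le> pi/2) G"
    using assms(6) strip_on_crossing_free[OF assms(1-4)] by (auto elim: eventually_mono)
qed

lemma crossings_in_interval:
  obtains a b where "a < b" "poly F a \<noteq> 0" "poly F b \<noteq> 0" "X \<subseteq> {a<..<b}"
proof -
  obtain B where B: "\<forall>x\<in>{x. poly F x = 0}. \<bar>x\<bar> \<le> B"
    using finite_imp_bounded[OF poly_roots_finite[OF F_nonzero]] by (auto simp: bounded_real)
  then have root_bound: "poly F x \<noteq> 0" if "B < \<bar>x\<bar>" for x
    using that by fastforce
  show ?thesis
  proof (rule that[of "-\<bar>B\<bar> - 1" "\<bar>B\<bar> + 1"])
    show "X \<subseteq> {-\<bar>B\<bar> - 1<..<\<bar>B\<bar> + 1}"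
      using root_bound crossing_is_root by (force simp: abs_less_iff)
  qed (use root_bound in auto)
qed

end

theorem lemma17:
  fixes p :: "complex poly" and \<phi> :: "real \<Rightarrow> real"
  assumes "lead_coeff p \<in> \<real>" and "Re (lead_coeff p) > 0"
    and "\<forall>w::real. poly p (\<i> * complex_of_real w) \<noteq> 0"
    and "continuous_on UNIV \<phi>"
    and "\<forall>w. cis (\<phi> w) = imag_axis_curve p w / complex_of_real (cmod (imag_axis_curve p w))"
  shows "(\<exists>L. (\<phi> \<longlongrightarrow> L) at_top) \<and> (\<exists>L. (\<phi> \<longlongrightarrow> L) at_bot)
    \<and> finite (odd_crossings p)
    \<and> (\<forall>w\<in>odd_crossings p. \<exists>s. ((\<lambda>x. sgn (deriv \<phi> x)) \<longlongrightarrow> s) (at w))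
    \<and> Delta \<phi> = pi * (\<Sum>w\<in>odd_crossings p. Lim (at w) (\<lambda>x. sgn (deriv \<phi> x)))"
proof -
  interpret imag_axis_arg_branch p \<phi>
    using assms by unfold_locales
  obtain a b where ab: "a < b" "poly F a \<noteq> 0" "poly F b \<noteq> 0" "X \<subseteq> {a<..<b}"
    by (rule crossings_in_interval) iprover
  have top: "(\<phi> \<longlongrightarrow> pi * of_int (strip_index b)) at_top"
    using ab by (intro tendsto_phi_beyond_crossings[of "{b..}"])
      (auto simp: at_top_le_at_infinity eventually_ge_at_top)
  have bot: "(\<phi> \<longlongrightarrow> pi * of_int (strip_index a)) at_bot"
    using ab by (intro tendsto_phi_beyond_crossings[of "{..a}"])
      (auto simp: at_bot_le_at_infinity eventually_le_at_bot)
  have "Delta \<phi> = pi * (of_int (strip_index b) - of_int (strip_index a))"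
    unfolding Delta_def using tendsto_Lim[OF _ top] tendsto_Lim[OF _ bot]
    by (simp add: right_diff_distrib)
  also have "\<dots> = pi * (\<Sum>w\<in>X. crossing_sign w)"
    using strip_index_difference[OF ab(1-3)] ab(4) by (simp add: Int_absorb2)
  finally show ?thesis
    using top bot finite_crossings tendsto_sgn_deriv_phi_crossing by blast
qed

end
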